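(* There exists a hypothesis class $\mathcal H$ with VC dimension $1$ such that every protocol that learns $\mathcal H$ properly with error parameter $\epsilon$ has sample complexity at least $\tilde\Omega(1/\epsilon)$. Moreover, this holds even if the input sample is realizable by $\mathcal H$.
   Context: Communication model: Let $\mathcal X$ be a domain and $\mathcal Z=\mathcal X\times\{\pm1\}$ the set of examples. A sample is a finite sequence of examples. Alice receives a sample $S_a$ and Bob a sample $S_b$; the joint sample $S=(S_a,S_b)$ is their concatenation, arbitrarily split. A deterministic protocol proceeds by messages, each either a single example from the sender's own input sample or a single bit, depending only on the sender's input and previous messages; output is determined by the messages. Each example or bit costs one unit; sample complexity is the maximal number of units transmitted. $L_S(h)=\frac{1}{|S|}\sum_{(x,y)\in S}1[h(x)\ne y]$; $S$ is realizable by $\mathcal H$ if $L_S(h)=0$ for some $h\in\mathcal H$. A protocol learns $\mathcal H$ with error $\epsilon$ if it always outputs $h$ with $L_S(h)\le\min_{f\in\mathcal H}L_S(f)+\epsilon$; it learns properly if its output always lies in $\mathcal H$. $\tilde\Omega$ denotes a lower bound up to logarithmic factors. *)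

theory Defs
  imports Complex_Main
begin

text \<open>Labels in {+1,-1} are represented by bool (True = +1).
  An example is a pair (x, y); a sample is a list of examples;
  a hypothesis is a function 'x => bool.\<close>

type_synonym 'x example = "'x \<times> bool"
type_synonym 'x sample = "'x example list"
type_synonym 'x hyp = "'x \<Rightarrow> bool"

definition loss :: "'x sample \<Rightarrow> 'x hyp \<Rightarrow> real" where
  "loss S h = real (length (filter (\<lambda>(x, y). h x \<noteq> y) S)) / real (length S)"

definition realizable :: "'x hyp set \<Rightarrow> 'x sample \<Rightarrow> bool" where
  "realizable H S \<longleftrightarrow> (\<exists>h\<in>H. loss S h = 0)"

definition shatters :: "'x hyp set \<Rightarrow> 'x set \<Rightarrow> bool" where
  "shatters H A \<longleftrightarrow> (\<forall>B\<subseteq>A. \<exists>h\<in>H. \<forall>x\<in>A. h x = (x \<in> B))"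

definition vc_dim_eq :: "'x hyp set \<Rightarrow> nat \<Rightarrow> bool" where
  "vc_dim_eq H d \<longleftrightarrow> (\<exists>A. finite A \<and> card A = d \<and> shatters H A)
                     \<and> (\<forall>A. finite A \<and> shatters H A \<longrightarrow> card A \<le> d)"

text \<open>A message is either a single example or a single bit; each costs one unit.\<close>
datatype 'x msg = MEx "'x \<times> bool" | MBit bool

text \<open>A deterministic protocol: the transcript determines who speaks next
  (Some True = Alice, Some False = Bob, None = the protocol has ended);
  the speaker's message depends only on the speaker's own input sample and
  the previous messages; the output depends only on the messages.\<close>
record 'x protocol =
  turn  :: "'x msg list \<Rightarrow> bool option"
  alice :: "'x sample \<Rightarrow> 'x msg list \<Rightarrow> 'x msg"
  bob   :: "'x sample \<Rightarrow> 'x msg list \<Rightarrow> 'x msg"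
  outp :: "'x msg list \<Rightarrow> 'x hyp"

definition msg_from :: "'x sample \<Rightarrow> 'x msg \<Rightarrow> bool" where
  "msg_from S m \<longleftrightarrow> (case m of MEx e \<Rightarrow> e \<in> set S | MBit b \<Rightarrow> True)"

inductive reaches :: "'x protocol \<Rightarrow> 'x sample \<Rightarrow> 'x sample \<Rightarrow> 'x msg list \<Rightarrow> bool"
  for P Sa Sb where
  start: "reaches P Sa Sb []"
| step_alice: "reaches P Sa Sb tr \<Longrightarrow> turn P tr = Some True
               \<Longrightarrow> reaches P Sa Sb (tr @ [alice P Sa tr])"
| step_bob: "reaches P Sa Sb tr \<Longrightarrow> turn P tr = Some False
               \<Longrightarrow> reaches P Sa Sb (tr @ [bob P Sb tr])"

definition legal_run :: "'x protocol \<Rightarrow> 'x sample \<Rightarrow> 'x sample \<Rightarrow> bool" where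
  "legal_run P Sa Sb \<longleftrightarrow>
     (\<forall>tr. reaches P Sa Sb tr \<longrightarrow>
        (turn P tr = Some True \<longrightarrow> msg_from Sa (alice P Sa tr)) \<and>
        (turn P tr = Some False \<longrightarrow> msg_from Sb (bob P Sb tr)))"

definition halts_with :: "'x protocol \<Rightarrow> 'x sample \<Rightarrow> 'x sample \<Rightarrow> 'x msg list \<Rightarrow> bool" where
  "halts_with P Sa Sb tr \<longleftrightarrow> reaches P Sa Sb tr \<and> turn P tr = None"

definition learns_properly_on ::
  "('x sample \<Rightarrow> bool) \<Rightarrow> 'x hyp set \<Rightarrow> real \<Rightarrow> 'x protocol \<Rightarrow> bool" where
  "learns_properly_on Adm H eps P \<longleftrightarrow>
     (\<forall>Sa Sb. Adm (Sa @ Sb) \<longrightarrow>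
        legal_run P Sa Sb \<and>
        (\<exists>tr. halts_with P Sa Sb tr \<and> outp P tr \<in> H \<and>
              loss (Sa @ Sb) (outp P tr) \<le> (INF f\<in>H. loss (Sa @ Sb) f) + eps))"

end

theory Submission
  imports Defs "HOL-Library.Nat_Bijection"
begin

text \<open>Take the class of two-point sets \<open>{b\<^sub>n, e\<^sub>n\<^sub>j}\<close>, \<open>j < n\<close>; every set containing
  \<open>e\<^sub>n\<^sub>j\<close> also contains \<open>b\<^sub>n\<close>, so no two points are shattered. For \<open>X \<subseteq> {..<n}\<close> let Alice
  hold \<open>(b\<^sub>n, +)\<close> and \<open>(e\<^sub>n\<^sub>j, -)\<close> for \<open>j \<in> X\<close>, and Bob \<open>(e\<^sub>n\<^sub>j, -)\<close> for \<open>j \<notin> X\<close>, and suppose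
  every run on a realizable input is shorter than \<open>L\<close>. Record for each \<open>X\<close> the first \<open>L\<close>
  messages together with one bit: whether the output is consistent with Alice's sample. If
  \<open>X \<noteq> X'\<close>, say \<open>j \<in> X' - X\<close>, had the same record, the rectangle property would make the
  protocol produce the same transcript on Alice's input for \<open>X\<close> and Bob's for \<open>X'\<close>. This input
  is realized by \<open>{b\<^sub>n, e\<^sub>n\<^sub>j}\<close>, so for error below \<open>1/(2n+1)\<close> the output is a consistent set
  \<open>{b\<^sub>n, e\<^sub>n\<^sub>j'}\<close> with \<open>j' \<in> X'\<close>: consistent with Alice's sample for \<open>X\<close> but not for \<open>X'\<close>.
  Hence \<open>2\<^sup>n \<le> 2 (n + 4)\<^sup>L\<close>, and \<open>n \<approx> 1/(4\<epsilon>)\<close> forces \<open>L \<ge> 1/(16 \<epsilon> ln (1/\<epsilon>))\<close>.\<close>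

lemma reaches_snocD:
  assumes "reaches P Sa Sb (tr @ [m])"
  shows "reaches P Sa Sb tr \<and>
    (turn P tr = Some True \<and> m = alice P Sa tr \<or> turn P tr = Some False \<and> m = bob P Sb tr)"
  using assms by (cases rule: reaches.cases) auto

lemma reaches_appendD: "reaches P Sa Sb (tr @ tr') \<Longrightarrow> reaches P Sa Sb tr"
proof (induction tr' rule: rev_induct)
  case (snoc m tr')
  then show ?case using reaches_snocD[of P Sa Sb "tr @ tr'" m] by simp
qed simp

lemma reaches_take: "reaches P Sa Sb tr \<Longrightarrow> reaches P Sa Sb (take k tr)"
  using reaches_appendD[of P Sa Sb "take k tr" "drop k tr"] by simp

lemma reaches_rectangle:
  "reaches P Sa Sb tr \<Longrightarrow> reaches P Sa' Sb' tr \<Longrightarrow> reaches P Sa Sb' tr"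
proof (induction tr rule: rev_induct)
  case (snoc m tr)
  from reaches_snocD[OF snoc.prems(1)] reaches_snocD[OF snoc.prems(2)] snoc.IH
  show ?case by (auto intro: reaches.step_alice reaches.step_bob)
qed (simp add: reaches.start)

lemma reaches_prefix:
  assumes "reaches P Sa Sb tr" "reaches P Sa Sb tr'" "length tr \<le> length tr'"
  shows "tr = take (length tr) tr'"
  using assms
proof (induction tr rule: rev_induct)
  case (snoc m tr)
  then have tr: "tr = take (length tr) tr'" and lt: "length tr < length tr'"
    using reaches_snocD[OF snoc.prems(1)] by auto
  then have take_Suc: "take (Suc (length tr)) tr' = tr @ [tr' ! length tr]"
    by (metis take_Suc_conv_app_nth)
  with reaches_take[OF snoc.prems(2), of "Suc (length tr)"]
  have "reaches P Sa Sb (tr @ [tr' ! length tr])" by simp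
  from reaches_snocD[OF this] reaches_snocD[OF snoc.prems(1)] have "m = tr' ! length tr"
    by auto
  with take_Suc show ?case by simp
qed simp

lemma reaches_halted_maximal:
  assumes "reaches P Sa Sb tr" "turn P tr = None" "reaches P Sa Sb tr'"
  shows "length tr' \<le> length tr"
proof (rule ccontr)
  assume "\<not> ?thesis"
  then have lt: "length tr < length tr'" by simp
  with reaches_prefix[OF assms(1,3)] have "take (Suc (length tr)) tr' = tr @ [tr' ! length tr]"
    by (metis less_imp_le take_Suc_conv_app_nth)
  with reaches_take[OF assms(3), of "Suc (length tr)"]
  have "reaches P Sa Sb (tr @ [tr' ! length tr])" by simp
  with assms(2) show False by (auto dest: reaches_snocD)
qed

lemma halts_with_unique:
  assumes "halts_with P Sa Sb tr" "reaches P Sa Sb tr'" "turn P tr' = None"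
  shows "tr = tr'"
proof -
  have "length tr = length tr'"
    using reaches_halted_maximal assms unfolding halts_with_def by (metis le_antisym)
  then show ?thesis
    using reaches_prefix[OF assms(2)] assms(1) unfolding halts_with_def by (metis order_refl take_all)
qed

text \<open>On inputs outside the learning guarantee a run may be illegal or infinite; the truncated
  run is defined on every input and stops at the first illegal message.\<close>

definition legal_step :: "'x protocol \<Rightarrow> 'x sample \<Rightarrow> 'x sample \<Rightarrow> 'x msg list \<Rightarrow> 'x msg list"
  where "legal_step P Sa Sb tr = (case turn P tr of
      None \<Rightarrow> tr
    | Some True \<Rightarrow> if msg_from Sa (alice P Sa tr) then tr @ [alice P Sa tr] else tr
    | Some False \<Rightarrow> if msg_from Sb (bob P Sb tr) then tr @ [bob P Sb tr] else tr)"

definition truncated_run :: "'x protocol \<Rightarrow> 'x sample \<Rightarrow> 'x sample \<Rightarrow> nat \<Rightarrow> 'x msg list"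
  where "truncated_run P Sa Sb k = (legal_step P Sa Sb ^^ k) []"

lemma truncated_run_Suc:
  "truncated_run P Sa Sb (Suc k) = legal_step P Sa Sb (truncated_run P Sa Sb k)"
  unfolding truncated_run_def by simp

lemma legal_step_cases:
  "legal_step P Sa Sb tr = tr \<or> length (legal_step P Sa Sb tr) = Suc (length tr)"
  unfolding legal_step_def by (auto split: option.splits bool.splits)

lemma legal_step_stuck:
  assumes "legal_step P Sa Sb tr = tr"
  shows "turn P tr = None \<or> turn P tr = Some True \<and> \<not> msg_from Sa (alice P Sa tr)
    \<or> turn P tr = Some False \<and> \<not> msg_from Sb (bob P Sb tr)"
  using assms unfolding legal_step_def by (auto split: option.splits bool.splits if_splits)

lemma reaches_truncated_run: "reaches P Sa Sb (truncated_run P Sa Sb k)"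
  by (induction k)
    (auto simp: truncated_run_Suc truncated_run_def legal_step_def reaches.start
      split: option.splits bool.splits intro: reaches.step_alice reaches.step_bob)

lemma length_truncated_run_le: "length (truncated_run P Sa Sb k) \<le> k"
proof (induction k)
  case (Suc k)
  then show ?case
    using legal_step_cases[of P Sa Sb "truncated_run P Sa Sb k"] by (auto simp: truncated_run_Suc)
qed (simp add: truncated_run_def)

lemma truncated_run_full_or_stuck:
  "length (truncated_run P Sa Sb k) = k \<or>
   legal_step P Sa Sb (truncated_run P Sa Sb k) = truncated_run P Sa Sb k"
proof (induction k)
  case (Suc k)
  then show ?case
    using legal_step_cases[of P Sa Sb "truncated_run P Sa Sb k"] by (auto simp: truncated_run_Suc)
qed (simp add: truncated_run_def)

lemma msg_from_in_alphabet: "msg_from S m \<Longrightarrow> m \<in> range MBit \<union> MEx ` set S"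
  unfolding msg_from_def by (cases m) auto

lemma set_truncated_run_subset:
  "set (truncated_run P Sa Sb k) \<subseteq> range MBit \<union> MEx ` (set Sa \<union> set Sb)"
proof (induction k)
  case (Suc k)
  then show ?case
    unfolding truncated_run_Suc legal_step_def
    by (auto split: option.splits bool.splits dest!: msg_from_in_alphabet)
qed (simp add: truncated_run_def)

lemma sum_power_le_Suc_power: "(\<Sum>k\<le>L. (s::nat) ^ k) \<le> (s + 1) ^ L"
proof (induction L)
  case (Suc L)
  have "(\<Sum>k\<le>Suc L. s ^ k) \<le> (s + 1) ^ L + s * (s + 1) ^ L"
    using Suc power_mono[of s "s + 1" L] by (simp add: add_mono)
  then show ?case by simp
qed simp

lemma card_lists_length_le_bound:
  assumes "finite A"
  shows "card {xs. set xs \<subseteq> A \<and> length xs \<le> L} \<le> (card A + 1) ^ L"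
  using card_lists_length_le[OF assms] sum_power_le_Suc_power by simp

lemma card_le_if_inj_on_short_lists:
  fixes f :: "'a \<Rightarrow> 'b list \<times> bool"
  assumes inj: "inj_on f D" and A: "finite A"
    and short: "\<And>x. x \<in> D \<Longrightarrow> set (fst (f x)) \<subseteq> A \<and> length (fst (f x)) \<le> L"
  shows "card D \<le> 2 * (card A + 1) ^ L"
proof -
  define T where "T = {xs. set xs \<subseteq> A \<and> length xs \<le> L}"
  have "f ` D \<subseteq> T \<times> UNIV"
    using short unfolding T_def by (auto simp: image_subset_iff mem_Times_iff)
  then have "card D \<le> card (T \<times> (UNIV :: bool set))"
    using card_image[OF inj] finite_lists_length_le[OF A]
    unfolding T_def by (metis card_mono finite_SigmaI finite_UNIV)
  also have "\<dots> = 2 * card T" by (simp add: card_cartesian_product)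
  also have "\<dots> \<le> 2 * (card A + 1) ^ L"
    unfolding T_def using card_lists_length_le_bound[OF A] by simp
  finally show ?thesis .
qed

definition consistent :: "'x sample \<Rightarrow> 'x hyp \<Rightarrow> bool" where
  "consistent S h \<longleftrightarrow> (\<forall>(x, y)\<in>set S. h x = y)"

lemma loss_nonneg: "0 \<le> loss S h"
  unfolding loss_def by simp

lemma loss_eq_0_if_consistent: "consistent S h \<Longrightarrow> loss S h = 0"
  unfolding consistent_def loss_def by (auto simp: filter_empty_conv)

lemma consistent_if_loss_small:
  assumes "loss S h \<le> eps" "eps * real (length S) < 1"
  shows "consistent S h"
proof (rule ccontr)
  assume "\<not> consistent S h"
  then have "filter (\<lambda>(x, y). h x \<noteq> y) S \<noteq> []"
    unfolding consistent_def by (auto simp: filter_empty_conv)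
  then have errors: "1 \<le> length (filter (\<lambda>(x, y). h x \<noteq> y) S)"
    by (simp add: Suc_le_eq length_greater_0_conv)
  then have "0 < length S"
    using length_filter_le[of "\<lambda>(x, y). h x \<noteq> y" S] by linarith
  with errors have "1 / real (length S) \<le> loss S h"
    unfolding loss_def by (intro divide_right_mono) simp_all
  with assms(1) have "1 / real (length S) \<le> eps" by simp
  then have "1 \<le> eps * real (length S)"
    using \<open>0 < length S\<close> by (simp add: field_simps)
  with assms(2) show False by simp
qed

lemma learns_properly_on_consistent:
  assumes learn: "learns_properly_on (realizable H) H eps P"
    and realizable: "realizable H (Sa @ Sb)" and small: "eps * real (length (Sa @ Sb)) < 1"
  obtains tr where "legal_run P Sa Sb" "halts_with P Sa Sb tr" "outp P tr \<in> H"
    "consistent (Sa @ Sb) (outp P tr)"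
proof -
  obtain tr where run: "legal_run P Sa Sb" "halts_with P Sa Sb tr" "outp P tr \<in> H"
    and err: "loss (Sa @ Sb) (outp P tr) \<le> (INF f\<in>H. loss (Sa @ Sb) f) + eps"
    using learn realizable unfolding learns_properly_on_def by blast
  have "(INF f\<in>H. loss (Sa @ Sb) f) \<le> 0"
    using realizable loss_nonneg unfolding realizable_def by (auto intro!: cINF_lower2 bdd_belowI2)
  with err have "loss (Sa @ Sb) (outp P tr) \<le> eps" by simp
  from consistent_if_loss_small[OF this small] run that show ?thesis by blast
qed

section \<open>The hard class\<close>

definition base_point :: "nat \<Rightarrow> nat" where
  "base_point n = prod_encode (n, 0)"

definition extra_point :: "nat \<Rightarrow> nat \<Rightarrow> nat" where
  "extra_point n j = prod_encode (n, Suc j)"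

definition pair_hyp :: "nat \<Rightarrow> nat \<Rightarrow> nat hyp" where
  "pair_hyp n j = (\<lambda>x. x = base_point n \<or> x = extra_point n j)"

definition hard_class :: "nat hyp set" where
  "hard_class = {pair_hyp n j | n j. j < n}"

lemma base_point_eq_iff [simp]: "base_point n = base_point m \<longleftrightarrow> n = m"
  unfolding base_point_def by (simp add: prod_encode_eq)

lemma extra_point_eq_iff [simp]: "extra_point n j = extra_point m i \<longleftrightarrow> n = m \<and> j = i"
  unfolding extra_point_def by (simp add: prod_encode_eq)

lemma base_point_neq_extra_point [simp]:
  "base_point n \<noteq> extra_point m j" "extra_point m j \<noteq> base_point n"
  unfolding base_point_def extra_point_def by (simp_all add: prod_encode_eq)

lemma pair_hyp_in_hard_class: "j < n \<Longrightarrow> pair_hyp n j \<in> hard_class"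
  unfolding hard_class_def by blast

lemma vc_dim_hard_class: "vc_dim_eq hard_class 1"
  unfolding vc_dim_eq_def
proof (intro conjI allI impI)
  have "shatters hard_class {base_point 1}"
    unfolding shatters_def
  proof (intro allI impI)
    fix B assume "B \<subseteq> {base_point 1}"
    then consider "B = {}" | "B = {base_point 1}" by blast
    then show "\<exists>h\<in>hard_class. \<forall>x\<in>{base_point 1}. h x = (x \<in> B)"
    proof cases
      case 1
      then show ?thesis
        using pair_hyp_in_hard_class[of 0 2] by (intro bexI[of _ "pair_hyp 2 0"]) (auto simp: pair_hyp_def)
    next
      case 2
      then show ?thesis
        using pair_hyp_in_hard_class[of 0 1] by (intro bexI[of _ "pair_hyp 1 0"]) (auto simp: pair_hyp_def)
    qed
  qed
  then show "\<exists>A. finite A \<and> card A = 1 \<and> shatters hard_class A"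
    by (intro exI[of _ "{base_point 1}"]) simp
next
  fix A assume A: "finite A \<and> shatters hard_class A"
  then have cut: "\<exists>h\<in>hard_class. \<forall>z\<in>A. h z = (z \<in> B)" if "B \<subseteq> A" for B
    using that unfolding shatters_def by blast
  have "x = y" if "x \<in> A" "y \<in> A" for x y
  proof (rule ccontr)
    assume "x \<noteq> y"
    obtain m i where "\<forall>z\<in>A. pair_hyp m i z"
      using cut[of A] unfolding hard_class_def by auto
    with that \<open>x \<noteq> y\<close> have base: "base_point m \<in> A" and extra: "extra_point m i \<in> A"
      unfolding pair_hyp_def by metis+
    obtain m' i' where "\<forall>z\<in>A. pair_hyp m' i' z = (z = extra_point m i)"
      using cut[of "{extra_point m i}"] extra unfolding hard_class_def by auto
    from this[rule_format, OF base] this[rule_format, OF extra] show False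
      unfolding pair_hyp_def by auto
  qed
  with A show "card A \<le> 1" by (simp add: card_le_Suc0_iff_eq)
qed

definition alice_sample :: "nat \<Rightarrow> nat set \<Rightarrow> nat sample" where
  "alice_sample n X =
     (base_point n, True) # map (\<lambda>j. (extra_point n j, False)) (filter (\<lambda>j. j \<in> X) [0..<n])"

definition bob_sample :: "nat \<Rightarrow> nat set \<Rightarrow> nat sample" where
  "bob_sample n X = map (\<lambda>j. (extra_point n j, False)) (filter (\<lambda>j. j \<notin> X) [0..<n])"

lemma length_samples_le: "length (alice_sample n X @ bob_sample n X') \<le> 2 * n + 1"
  using length_filter_le[of "\<lambda>j. j \<in> X" "[0..<n]"] length_filter_le[of "\<lambda>j. j \<notin> X'" "[0..<n]"]
  unfolding alice_sample_def bob_sample_def by simp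

lemma consistent_cross_samples:
  "j < n \<Longrightarrow> j \<notin> X \<Longrightarrow> j \<in> X' \<Longrightarrow> consistent (alice_sample n X @ bob_sample n X') (pair_hyp n j)"
  unfolding consistent_def alice_sample_def bob_sample_def pair_hyp_def by auto

lemma realizable_cross_samples:
  assumes "j < n" "j \<notin> X" "j \<in> X'"
  shows "realizable hard_class (alice_sample n X @ bob_sample n X')"
  using pair_hyp_in_hard_class[OF assms(1)] loss_eq_0_if_consistent[OF consistent_cross_samples[OF assms]]
  unfolding realizable_def by blast

lemma consistent_cross_samples_hard_class:
  assumes "h \<in> hard_class" "consistent (alice_sample n X @ bob_sample n X') h"
  shows "consistent (alice_sample n X) h \<and> \<not> consistent (alice_sample n X') h"
proof -
  obtain m j where h: "h = pair_hyp m j" "j < m"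
    using assms(1) unfolding hard_class_def by auto
  have "h (base_point n)"
    using assms(2) unfolding consistent_def alice_sample_def by auto
  with h have "m = n" unfolding pair_hyp_def by auto
  with h assms(2) have "j \<in> X'"
    unfolding consistent_def bob_sample_def pair_hyp_def by auto
  with h \<open>m = n\<close> have "\<not> consistent (alice_sample n X') h"
    unfolding consistent_def alice_sample_def pair_hyp_def by auto
  with assms(2) show ?thesis unfolding consistent_def by auto
qed

definition hard_alphabet :: "nat \<Rightarrow> nat msg set" where
  "hard_alphabet n =
     range MBit \<union> MEx ` insert (base_point n, True) ((\<lambda>j. (extra_point n j, False)) ` {..<n})"

lemma finite_hard_alphabet: "finite (hard_alphabet n)"
  unfolding hard_alphabet_def by simp

lemma card_hard_alphabet_le: "card (hard_alphabet n) \<le> n + 3"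
proof -
  define U where "U = insert (base_point n, True) ((\<lambda>j. (extra_point n j, False)) ` {..<n})"
  have "card U \<le> Suc (card ((\<lambda>j. (extra_point n j, False)) ` {..<n}))"
    unfolding U_def by (rule card_insert_le_m1) simp_all
  also have "\<dots> \<le> n + 1"
    using card_image_le[of "{..<n}" "\<lambda>j. (extra_point n j, False)"] by simp
  finally have "card U \<le> n + 1" .
  have "card (hard_alphabet n) \<le> card (range (MBit :: bool \<Rightarrow> nat msg)) + card (MEx ` U)"
    unfolding hard_alphabet_def U_def by (rule card_Un_le)
  also have "\<dots> \<le> 2 + (n + 1)"
    using card_image_le[of UNIV MBit] card_image_le[of U MEx] \<open>card U \<le> n + 1\<close>
    unfolding U_def by (intro add_mono) simp_all
  finally show ?thesis by simp
qed

lemma set_truncated_run_hard_alphabet: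
  "set (truncated_run P (alice_sample n X) (bob_sample n X') k) \<subseteq> hard_alphabet n"
  using set_truncated_run_subset[of P "alice_sample n X" "bob_sample n X'" k]
  unfolding hard_alphabet_def alice_sample_def bob_sample_def by auto

section \<open>The fooling-set argument\<close>

lemma truncated_runs_distinguish:
  fixes P :: "nat protocol"
  assumes learn: "learns_properly_on (realizable hard_class) hard_class eps P"
    and eps: "0 < eps" "eps * real (2 * n + 1) < 1"
    and short: "\<And>tr. halts_with P (alice_sample n X) (bob_sample n X') tr \<Longrightarrow> length tr < L"
    and j: "j < n" "j \<notin> X" "j \<in> X'"
    and same_run: "truncated_run P (alice_sample n X) (bob_sample n X) L =
                   truncated_run P (alice_sample n X') (bob_sample n X') L"
  shows "consistent (alice_sample n X) (outp P (truncated_run P (alice_sample n X) (bob_sample n X) L))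
     \<noteq> consistent (alice_sample n X') (outp P (truncated_run P (alice_sample n X') (bob_sample n X') L))"
proof -
  define Sa Sb Sa' Sb' where "Sa = alice_sample n X" and "Sb = bob_sample n X"
    and "Sa' = alice_sample n X'" and "Sb' = bob_sample n X'"
  define t where "t = truncated_run P Sa Sb L"
  have t': "t = truncated_run P Sa' Sb' L"
    using same_run unfolding t_def Sa_def Sb_def Sa'_def Sb'_def .
  have cross: "reaches P Sa Sb' t"
    using reaches_rectangle[of P Sa Sb t Sa' Sb'] reaches_truncated_run t' unfolding t_def
    by metis
  have "length (Sa @ Sb') \<le> 2 * n + 1"
    using length_samples_le unfolding Sa_def Sb'_def .
  then have "eps * real (length (Sa @ Sb')) \<le> eps * real (2 * n + 1)"
    using eps(1) by (intro mult_left_mono) simp_all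
  with eps(2) have small: "eps * real (length (Sa @ Sb')) < 1" by simp
  have "realizable hard_class (Sa @ Sb')"
    using realizable_cross_samples[OF j] unfolding Sa_def Sb'_def .
  from learns_properly_on_consistent[OF learn this small] obtain tr
    where legal: "legal_run P Sa Sb'" and halts: "halts_with P Sa Sb' tr"
      and proper: "outp P tr \<in> hard_class" and consistent: "consistent (Sa @ Sb') (outp P tr)" .
  have "length tr < L" using short halts unfolding Sa_def Sb'_def .
  moreover have "length t \<le> length tr"
    using reaches_halted_maximal halts cross unfolding halts_with_def by blast
  ultimately have "length t \<noteq> L" by simp
  then have stuck: "legal_step P Sa Sb t = t" "legal_step P Sa' Sb' t = t"
    using truncated_run_full_or_stuck[of P Sa Sb L] truncated_run_full_or_stuck[of P Sa' Sb' L] t'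
    unfolding t_def by auto
  \<comment> \<open>Alice's view agrees with the first run and Bob's with the second, and the cross run is legal\<close>
  have "turn P t = None"
    using legal_step_stuck[OF stuck(1)] legal_step_stuck[OF stuck(2)] legal cross
    unfolding legal_run_def by auto
  then have "tr = t" using halts_with_unique[OF halts cross] by simp
  with consistent_cross_samples_hard_class[OF proper consistent[unfolded Sa_def Sb'_def]] t'
  show ?thesis unfolding t_def Sa_def Sb_def Sa'_def Sb'_def by simp
qed

lemma proper_learner_long_run:
  fixes P :: "nat protocol"
  assumes learn: "learns_properly_on (realizable hard_class) hard_class eps P"
    and eps: "0 < eps" "eps * real (2 * n + 1) < 1"
    and small: "2 * (n + 4) ^ L < (2::nat) ^ n"
  shows "\<exists>Sa Sb tr. realizable hard_class (Sa @ Sb) \<and> halts_with P Sa Sb tr \<and> L \<le> length tr"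
proof (rule ccontr)
  assume "\<not> ?thesis"
  then have short: "length tr < L" if "halts_with P (alice_sample n X) (bob_sample n X') tr"
    and "j < n" "j \<notin> X" "j \<in> X'" for X X' tr j
    using that realizable_cross_samples[of j n X X'] by (meson not_le)
  define run where "run X = truncated_run P (alice_sample n X) (bob_sample n X) L" for X
  define f where "f X = (run X, consistent (alice_sample n X) (outp P (run X)))" for X
  have separates: "f X \<noteq> f X'" if "X' \<subseteq> {..<n}" "j \<notin> X" "j \<in> X'" for X X' j
  proof -
    from that have "j < n" by auto
    with that short have "\<And>tr. halts_with P (alice_sample n X) (bob_sample n X') tr \<Longrightarrow> length tr < L"
      by blast
    from truncated_runs_distinguish[OF learn eps this \<open>j < n\<close> that(2,3)] show ?thesis
      unfolding f_def run_def by auto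
  qed
  have inj: "inj_on f (Pow {..<n})"
  proof (intro inj_onI)
    fix X X' assume X: "X \<in> Pow {..<n}" and X': "X' \<in> Pow {..<n}" and "f X = f X'"
    show "X = X'"
    proof (rule ccontr)
      assume "X \<noteq> X'"
      then obtain j where "j \<in> X' - X \<or> j \<in> X - X'" by blast
      with X X' separates[of X' j X] separates[of X j X'] \<open>f X = f X'\<close> show False by auto
    qed
  qed
  have "(2::nat) ^ n \<le> 2 * (card (hard_alphabet n) + 1) ^ L"
    using card_le_if_inj_on_short_lists[OF inj finite_hard_alphabet[of n], of L]
    unfolding f_def run_def
    by (simp add: card_Pow set_truncated_run_hard_alphabet length_truncated_run_le)
  also have "\<dots> \<le> 2 * (n + 4) ^ L" using card_hard_alphabet_le[of n] by (simp add: power_mono)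
  finally show False using small by simp
qed

section \<open>Choice of parameters\<close>

lemma ln_plus_le_sixteenth:
  fixes y :: real
  assumes "4096 \<le> y"
  shows "ln y + 3/2 \<le> y / 16"
proof -
  define s where "s = sqrt y"
  have s: "64 \<le> s" "y = s * s"
    unfolding s_def using assms by (auto simp: real_le_rsqrt)
  have "ln y = 2 * ln s" unfolding s_def using assms by (simp add: ln_sqrt)
  also have "\<dots> \<le> 2 * (s - 1)" using ln_le_minus_one[of s] s by simp
  finally have "ln y \<le> 2 * s - 2" by simp
  moreover have "64 * s \<le> s * s" using s(1) by (intro mult_right_mono) simp_all
  ultimately show ?thesis using s by linarith
qed

lemma hard_parameters:
  fixes eps :: real
  assumes eps: "0 < eps" "eps < 1/4096"
  defines "n \<equiv> nat \<lfloor>1 / (4 * eps)\<rfloor>" and "L \<equiv> nat \<lceil>(1/16) / (eps * ln (1 / eps))\<rceil>"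
  shows "eps * real (2 * n + 1) < 1" "2 * (n + 4) ^ L < (2::nat) ^ n"
    "(1/16) / (eps * ln (1 / eps)) \<le> real L"
proof -
  define y where "y = 1 / eps"
  have y: "4096 < y" and eps_y: "eps = 1 / y"
    using eps unfolding y_def by (simp_all add: field_simps)
  have n: "real n \<le> y / 4" "y / 4 - 1 < real n"
    unfolding n_def eps_y using y by (simp_all, linarith+)
  show "eps * real (2 * n + 1) < 1"
    using n y unfolding eps_y by (simp add: field_simps)
  have "0 < ln y" using y by simp
  define B where "B = (1/16) / (eps * ln (1 / eps))"
  have B: "B = y / (16 * ln y)"
    unfolding B_def eps_y using y by simp
  with \<open>0 < ln y\<close> y have "real L = of_int \<lceil>B\<rceil>"
    unfolding L_def B_def[symmetric] by simp
  then have L: "B \<le> real L" "real L \<le> B + 1" by linarith+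
  then show "(1/16) / (eps * ln (1 / eps)) \<le> real L" unfolding B_def by simp
  have "real L * ln (real n + 4) \<le> (y / (16 * ln y) + 1) * ln y"
    using L n y B \<open>0 < ln y\<close> by (intro mult_mono) auto
  also have "\<dots> = y / 16 + ln y" using \<open>0 < ln y\<close> by (simp add: field_simps)
  also have "\<dots> \<le> y / 8 - 3/2" using ln_plus_le_sixteenth[of y] y by simp
  also have "\<dots> < (real n - 1) * (1/2)" using n by simp
  also have "\<dots> \<le> (real n - 1) * ln 2"
    using n y ln_le_minus_one[of "1/2"] by (intro mult_left_mono) (simp_all add: ln_div)
  finally have "ln 2 + real L * ln (real n + 4) < real n * ln 2" by (simp add: algebra_simps)
  then have "exp (ln 2 + real L * ln (real n + 4)) < exp (real n * ln 2)" by simp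
  then have "real (2 * (n + 4) ^ L) < real ((2::nat) ^ n)"
    by (simp add: exp_add exp_of_nat_mult ln_realpow[symmetric])
  then show "2 * (n + 4) ^ L < (2::nat) ^ n" by (simp only: of_nat_less_iff)
qed

lemma proper_learner_needs_long_transcript:
  fixes P :: "nat protocol"
  assumes eps: "0 < eps" "eps < 1/4096"
    and learn: "learns_properly_on (realizable hard_class) hard_class eps P"
  shows "\<exists>Sa Sb tr. realizable hard_class (Sa @ Sb) \<and> halts_with P Sa Sb tr \<and>
    (1/16) / (eps * ln (1 / eps)) \<le> real (length tr)"
proof -
  define n where "n = nat \<lfloor>1 / (4 * eps)\<rfloor>"
  define L where "L = nat \<lceil>(1/16) / (eps * ln (1 / eps))\<rceil>"
  have "eps * real (2 * n + 1) < 1" "2 * (n + 4) ^ L < (2::nat) ^ n"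
    and L: "(1/16) / (eps * ln (1 / eps)) \<le> real L"
    using hard_parameters[OF eps] unfolding n_def L_def by auto
  with proper_learner_long_run[OF learn] eps obtain Sa Sb tr
    where "realizable hard_class (Sa @ Sb)" "halts_with P Sa Sb tr" "L \<le> length tr"
    by blast
  with L show ?thesis by force
qed

theorem theorem2:
  "\<exists>H :: nat hyp set. vc_dim_eq H 1 \<and>
     (\<exists>c > 0. \<exists>k :: nat. \<exists>eps0 > 0. \<forall>eps. 0 < eps \<and> eps < eps0 \<longrightarrow>
        (\<forall>P :: nat protocol. learns_properly_on (realizable H) H eps P \<longrightarrow>
           (\<exists>Sa Sb tr. realizable H (Sa @ Sb) \<and> halts_with P Sa Sb tr \<and>
               real (length tr) \<ge> c / (eps * (ln (1 / eps)) ^ k))))"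
  using vc_dim_hard_class proper_learner_needs_long_transcript
  by (intro exI[of _ hard_class] conjI exI[of _ "1/16"] exI[of _ "1::nat"] exI[of _ "1/4096"])
    simp_all

end
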